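(* Let $\mathcal T$ be a transducer with $n\ge1$ states. If $\mathcal T$ is zero-avoiding with minimum bound $k$, then $k<n$.
   Context: A transducer is a quintuple $\mathcal T=(Q,\Sigma,E,I,F)$ with finite state set $Q$, finite alphabet $\Sigma$, finite transition set $E\subseteq Q\times\{x/y : x,y\in\Sigma\cup\{\lambda\}\}\times Q$ ($\lambda$ the empty word), nonempty initial set $I\subseteq Q$, final set $F\subseteq Q$. A path is a finite sequence of consecutive transitions; its label $x_1\cdots x_\ell/y_1\cdots y_\ell$ is formed by concatenating input parts and output parts. A computation is a path that is empty or starts at an initial state. For a path $P$ with label $u/v$, the length discrepancy is $d(P)=|u|-|v|$, and $d_{max}(P)=\max\{|d(Q)| : Q\text{ a prefix of }P\}$ (prefixes being initial segments of transitions, including the empty path). $\mathcal T$ is zero-avoiding with bound $k\in\mathbb N_0$ if for every computation $P$ of $\mathcal T$, $d_{max}(P)>k$ implies $d(P)\neq 0$. It is zero-avoiding with minimum bound $k$ if it is zero-avoiding with bound $k$ but not with bound $k-1$. *)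

theory Defs
  imports Main
begin

text \<open>A label x/y with x, y in Sigma \<union> {lambda}; lambda is represented by None.\<close>
type_synonym 'a label = "'a option \<times> 'a option"
type_synonym ('q, 'a) trans = "'q \<times> 'a label \<times> 'q"

record ('q, 'a) transducer =
  states :: "'q set"
  alph :: "'a set"
  edges :: "('q, 'a) trans set"
  initial :: "'q set"
  final :: "'q set"

definition sym_ok :: "'a set \<Rightarrow> 'a option \<Rightarrow> bool" where
  "sym_ok S x \<longleftrightarrow> (case x of None \<Rightarrow> True | Some a \<Rightarrow> a \<in> S)"

definition transducer :: "('q, 'a) transducer \<Rightarrow> bool" where
  "transducer T \<longleftrightarrow> finite (states T) \<and> finite (alph T) \<and> finite (edges T)
     \<and> (\<forall>(p, (x, y), q) \<in> edges T. p \<in> states T \<and> q \<in> states T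
            \<and> sym_ok (alph T) x \<and> sym_ok (alph T) y)
     \<and> initial T \<noteq> {} \<and> initial T \<subseteq> states T \<and> final T \<subseteq> states T"

fun src :: "('q, 'a) trans \<Rightarrow> 'q" where "src (p, l, q) = p"
fun tgt :: "('q, 'a) trans \<Rightarrow> 'q" where "tgt (p, l, q) = q"

definition is_path :: "('q, 'a) transducer \<Rightarrow> ('q, 'a) trans list \<Rightarrow> bool" where
  "is_path T P \<longleftrightarrow> set P \<subseteq> edges T \<and> (\<forall>i. Suc i < length P \<longrightarrow> tgt (P ! i) = src (P ! Suc i))"

definition computation :: "('q, 'a) transducer \<Rightarrow> ('q, 'a) trans list \<Rightarrow> bool" where
  "computation T P \<longleftrightarrow> is_path T P \<and> (P = [] \<or> src (hd P) \<in> initial T)"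

definition olen :: "'a option \<Rightarrow> int" where
  "olen x = (case x of None \<Rightarrow> 0 | Some _ \<Rightarrow> 1)"

definition disc :: "('q, 'a) trans list \<Rightarrow> int" where
  "disc P = (\<Sum>t\<leftarrow>P. (case t of (p, (x, y), q) \<Rightarrow> olen x - olen y))"

definition dmax :: "('q, 'a) trans list \<Rightarrow> int" where
  "dmax P = Max {\<bar>disc (take i P)\<bar> | i. i \<le> length P}"

definition zero_avoiding :: "('q, 'a) transducer \<Rightarrow> nat \<Rightarrow> bool" where
  "zero_avoiding T k \<longleftrightarrow> (\<forall>P. computation T P \<longrightarrow> dmax P > int k \<longrightarrow> disc P \<noteq> 0)"

text \<open>Minimum bound k: zero-avoiding with bound k but not with bound k-1
  (for k = 0 the second condition is vacuous, since no transducer is zero-avoiding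
  with bound -1: the empty computation has d = 0 and d_max = 0 > -1).\<close>
definition zero_avoiding_min :: "('q, 'a) transducer \<Rightarrow> nat \<Rightarrow> bool" where
  "zero_avoiding_min T k \<longleftrightarrow> zero_avoiding T k \<and> (k > 0 \<longrightarrow> \<not> zero_avoiding T (k - 1))"

end

theory Submission
  imports Defs
begin

text \<open>Suppose T has at most k states, with k \<ge> 1, and some computation P returns to
  discrepancy 0 after reaching discrepancy of absolute value at least k, say +k (the
  negative case is symmetric). Recording the first moment P reaches each level
  0, 1, \<dots>, k gives k + 1 states, so two coincide: before the peak P contains a cycle
  of positive discrepancy e1. Likewise, on the way back down to 0 there is a cycle of
  negative discrepancy -e2. Traversing the first cycle e2 additional times and the
  second e1 additional times yields a computation that still ends at discrepancy 0 but
  whose peak exceeds k by e1 e2. Thus zero-avoidance with a bound k \<ge> n implies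
  zero-avoidance with bound k - 1, so the minimum bound is below n.\<close>

lemma is_path_Nil [simp]: "is_path T []"
  by (simp add: is_path_def)

lemma is_path_Cons:
  "is_path T (t # P) \<longleftrightarrow> t \<in> edges T \<and> is_path T P \<and> (P \<noteq> [] \<longrightarrow> tgt t = src (hd P))"
proof -
  have "(\<forall>i. Suc i < length (t # P) \<longrightarrow> tgt ((t # P) ! i) = src ((t # P) ! Suc i)) \<longleftrightarrow>
      (P \<noteq> [] \<longrightarrow> tgt t = src (hd P)) \<and> (\<forall>i. Suc i < length P \<longrightarrow> tgt (P ! i) = src (P ! Suc i))"
    apply (auto simp: hd_conv_nth)
    subgoal for i by (cases i) auto
    done
  then show ?thesis
    by (auto simp: is_path_def)
qed

lemma is_path_append:
  "is_path T (P @ P') \<longleftrightarrow>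
     is_path T P \<and> is_path T P' \<and> (P \<noteq> [] \<longrightarrow> P' \<noteq> [] \<longrightarrow> tgt (last P) = src (hd P'))"
  by (induction P) (auto simp: is_path_Cons)

lemma is_path_replace_infix:
  assumes "is_path T (A @ C @ B)" "is_path T C'" "C \<noteq> []" "C' \<noteq> []"
    and "src (hd C') = src (hd C)" "tgt (last C') = tgt (last C)"
  shows "is_path T (A @ C' @ B)"
  using assms by (auto simp: is_path_append)

lemma computation_replace_infix:
  assumes "computation T (A @ C @ B)" "is_path T C'" "C \<noteq> []" "C' \<noteq> []"
    and "src (hd C') = src (hd C)" "tgt (last C') = tgt (last C)"
  shows "computation T (A @ C' @ B)"
  using assms is_path_replace_infix[of T A C B C'] by (cases A) (auto simp: computation_def)

definition is_cycle :: "('q, 'a) transducer \<Rightarrow> ('q, 'a) trans list \<Rightarrow> bool" where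
  "is_cycle T C \<longleftrightarrow> is_path T C \<and> C \<noteq> [] \<and> tgt (last C) = src (hd C)"

lemma is_path_concat_replicate:
  assumes "is_cycle T C"
  shows "is_path T (concat (replicate m C))"
proof (induction m)
  case (Suc m)
  then show ?case
    using assms by (cases m) (auto simp: is_cycle_def is_path_append)
qed simp

lemma computation_pump:
  assumes "computation T (A @ C @ B)" "is_cycle T C" "0 < m"
  shows "computation T (A @ concat (replicate m C) @ B)"
proof -
  obtain m' where m: "m = Suc m'" using assms(3) by (cases m) auto
  have "concat (replicate m C) = concat (replicate m' C) @ C"
    unfolding m by (induction m') auto
  then have "last (concat (replicate m C)) = last C"
    using assms(2) by (simp add: is_cycle_def)
  moreover have "hd (concat (replicate m C)) = hd C"
    using assms(2) by (simp add: m is_cycle_def)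
  ultimately show ?thesis
    using assms is_path_concat_replicate[OF assms(2), of m]
    by (intro computation_replace_infix[OF assms(1)]) (auto simp: is_cycle_def m simp del: replicate_Suc)
qed

lemma disc_Nil [simp]: "disc [] = 0"
  by (simp add: disc_def)

lemma disc_append [simp]: "disc (P @ P') = disc P + disc P'"
  by (simp add: disc_def)

lemma disc_concat_replicate [simp]: "disc (concat (replicate m C)) = int m * disc C"
  by (induction m) (auto simp: algebra_simps)

lemma abs_disc_take_Suc_diff: "\<bar>disc (take (Suc i) P) - disc (take i P)\<bar> \<le> 1"
proof (cases "i < length P")
  case True
  then show ?thesis
    by (auto simp: take_Suc_conv_app_nth disc_def olen_def split: option.splits prod.splits)
qed simp

lemma abs_disc_take_le_dmax: "i \<le> length P \<Longrightarrow> \<bar>disc (take i P)\<bar> \<le> dmax P"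
  unfolding dmax_def by (rule Max_ge) auto

lemma dmax_attained: "\<exists>i \<le> length P. \<bar>disc (take i P)\<bar> = dmax P"
proof -
  have "dmax P \<in> {\<bar>disc (take i P)\<bar> | i. i \<le> length P}"
    unfolding dmax_def by (rule Max_in) auto
  then show ?thesis by auto
qed

lemma unit_step_rise_revisits:
  fixes g :: "nat \<Rightarrow> int" and st :: "nat \<Rightarrow> 'q"
  assumes step: "\<And>i. \<bar>g (Suc i) - g i\<bar> \<le> 1"
    and "a \<le> b" and rise: "g a + int (card S) \<le> g b"
    and "finite S" and st: "\<And>i. a \<le> i \<Longrightarrow> i \<le> b \<Longrightarrow> st i \<in> S"
  obtains p p' where "a \<le> p" "p < p'" "p' \<le> b" "st p = st p'" "g p < g p'"
proof -
  have ivt: "\<exists>i. a \<le> i \<and> i \<le> c \<and> g i = g a + int j" if "a \<le> c" "g a + int j \<le> g c" for c j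
    using nat_intermed_int_val[of a c g "g a + int j"] step that by auto
  define u where "u j = (LEAST i. a \<le> i \<and> g i = g a + int j)" for j
  have u: "a \<le> u j \<and> u j \<le> c \<and> g (u j) = g a + int j"
    if c: "a \<le> c" "g a + int j \<le> g c" for c j
  proof -
    obtain i where i: "a \<le> i" "i \<le> c" "g i = g a + int j"
      using ivt[OF c] by blast
    have "a \<le> u j \<and> g (u j) = g a + int j" "u j \<le> i"
      unfolding u_def by (rule LeastI, use i in blast, rule Least_le, use i in blast)
    with i show ?thesis by auto
  qed
  have u_mono: "u j < u j'" if "j < j'" "j' \<le> card S" for j j'
  proof -
    have u': "a \<le> u j'" "g (u j') = g a + int j'"
      using u[OF \<open>a \<le> b\<close>, of j'] rise that by auto
    then have "a \<le> u j \<and> u j \<le> u j' \<and> g (u j) = g a + int j"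
      using that by (intro u) auto
    moreover have "u j \<noteq> u j'"
      using u' that calculation by auto
    ultimately show ?thesis by auto
  qed
  have "\<not> inj_on (st \<circ> u) {0..card S}"
  proof
    assume "inj_on (st \<circ> u) {0..card S}"
    moreover have "(st \<circ> u) ` {0..card S} \<subseteq> S"
      using u[OF \<open>a \<le> b\<close>] rise st by force
    ultimately have "card {0..card S} \<le> card S"
      using card_inj_on_le \<open>finite S\<close> by blast
    then show False by simp
  qed
  then obtain j j' where "j < j'" "j' \<le> card S" "st (u j) = st (u j')"
    unfolding inj_on_def by (metis atLeastAtMost_iff comp_apply linorder_neq_iff)
  moreover have "a \<le> u j" "u j' \<le> b" "g (u j) < g (u j')"
    using u[OF \<open>a \<le> b\<close>, of j] u[OF \<open>a \<le> b\<close>, of j'] rise calculation by auto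
  ultimately show thesis
    using that[of "u j" "u j'"] u_mono by blast
qed

definition state_at :: "('q, 'a) trans list \<Rightarrow> nat \<Rightarrow> 'q" where
  "state_at P i = (if i = 0 then src (hd P) else tgt (P ! (i - 1)))"

lemma state_at_in_states:
  assumes "transducer T" "is_path T P" "P \<noteq> []" "i \<le> length P"
  shows "state_at P i \<in> states T"
proof -
  have "src t \<in> states T \<and> tgt t \<in> states T" if "t \<in> edges T" for t
    using assms(1) that unfolding transducer_def by (cases t) fastforce
  moreover have "hd P \<in> edges T" "i \<noteq> 0 \<Longrightarrow> P ! (i - 1) \<in> edges T"
    using assms(2-4) unfolding is_path_def by auto
  ultimately show ?thesis
    by (auto simp: state_at_def)
qed

lemma take_eq_take_append_drop_take: "i \<le> j \<Longrightarrow> take j P = take i P @ drop i (take j P)"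
  by (metis append_take_drop_id min.absorb1 take_take)

lemma is_cycle_drop_take:
  assumes "is_path T P" "p < p'" "p' \<le> length P" "state_at P p = state_at P p'"
  shows "is_cycle T (drop p (take p' P))"
proof -
  let ?C = "drop p (take p' P)"
  have "P = take p P @ ?C @ drop p' P"
    using take_eq_take_append_drop_take[of p p' P] append_take_drop_id[of p' P] assms(2)
    by (metis append.assoc less_imp_le)
  then have "is_path T ?C"
    using assms(1) is_path_append by metis
  moreover have "src (hd ?C) = state_at P p"
  proof (cases p)
    case (Suc q)
    then have "tgt (P ! q) = src (P ! Suc q)"
      using assms(1-3) unfolding is_path_def by auto
    then show ?thesis
      using Suc assms(2,3) by (simp add: state_at_def hd_drop_conv_nth)
  qed (use assms(2,3) in \<open>auto simp: state_at_def hd_conv_nth\<close>)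
  moreover have "tgt (last ?C) = state_at P p'"
    using assms(2,3) by (simp add: state_at_def last_conv_nth)
  ultimately show ?thesis
    using assms(2,3,4) by (simp add: is_cycle_def)
qed

lemma rising_cycle:
  assumes "transducer T" "is_path T P" "P \<noteq> []" "card (states T) \<le> k" "\<bar>\<sigma>\<bar> = 1"
    and "a \<le> b" "b \<le> length P" "\<sigma> * disc (take a P) + int k \<le> \<sigma> * disc (take b P)"
  obtains A C B where "drop a (take b P) = A @ C @ B" "is_cycle T C" "0 < \<sigma> * disc C"
proof -
  define g where "g i = \<sigma> * disc (take i P)" for i
  have "\<bar>g (Suc i) - g i\<bar> \<le> 1" for i
    using abs_disc_take_Suc_diff[of i P] assms(5)
    by (simp add: g_def abs_mult flip: right_diff_distrib)
  moreover have "finite (states T)"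
    using assms(1) by (simp add: transducer_def)
  moreover have "g a + int (card (states T)) \<le> g b"
    using assms(4,8) by (simp add: g_def)
  moreover have "state_at P i \<in> states T" if "i \<le> b" for i
    using state_at_in_states[OF assms(1-3)] that assms(7) by simp
  ultimately obtain p p' where pp: "a \<le> p" "p < p'" "p' \<le> b"
      "state_at P p = state_at P p'" "g p < g p'"
    using unit_step_rise_revisits[of g a b "states T" "state_at P"] assms(6) by blast
  define C where "C = drop p (take p' P)"
  define B where "B = drop p' (take b P)"
  have "take p' P = take p P @ C"
    unfolding C_def using pp(2) by (intro take_eq_take_append_drop_take) simp
  moreover have "take b P = take p' P @ B"
    unfolding B_def using pp(3) by (rule take_eq_take_append_drop_take)
  ultimately have "take b P = take p P @ C @ B"
    by simp
  then have "drop a (take b P) = drop a (take p P) @ C @ B"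
    using pp(1-3) assms(7) by simp
  moreover have "0 < \<sigma> * disc C"
    using pp(5) \<open>take p' P = take p P @ C\<close> unfolding g_def by (simp add: algebra_simps)
  moreover have "is_cycle T C"
    unfolding C_def using is_cycle_drop_take[OF assms(2) pp(2) _ pp(4)] pp(3) assms(7) by simp
  ultimately show thesis
    using that by blast
qed

lemma pump_opposite_cycles:
  assumes "computation T (A @ C1 @ M1 @ M2 @ C2 @ Z)" "is_cycle T C1" "is_cycle T C2"
    and "\<bar>\<sigma>\<bar> = 1" "0 < \<sigma> * disc C1" "\<sigma> * disc C2 < 0"
  obtains Q where "computation T Q" "disc Q = disc (A @ C1 @ M1 @ M2 @ C2 @ Z)"
    and "\<sigma> * disc (A @ C1 @ M1) < dmax Q"
proof -
  define e1 where "e1 = \<sigma> * disc C1"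
  define e2 where "e2 = - \<sigma> * disc C2"
  have e: "0 < e1" "0 < e2"
    using assms(5,6) by (simp_all add: e1_def e2_def)
  \<comment> \<open>e2 extra rounds of C1 and e1 extra rounds of C2 cancel in the total discrepancy\<close>
  define m1 where "m1 = nat e2 + 1"
  define m2 where "m2 = nat e1 + 1"
  define X where "X = A @ concat (replicate m1 C1) @ M1"
  define Q where "Q = X @ M2 @ concat (replicate m2 C2) @ Z"
  have "computation T ((A @ C1 @ M1 @ M2) @ concat (replicate m2 C2) @ Z)"
    using computation_pump[of T "A @ C1 @ M1 @ M2" C2 Z m2] assms(1,3) by (simp add: m2_def)
  then have comp: "computation T Q"
    using computation_pump[of T A C1 "M1 @ M2 @ concat (replicate m2 C2) @ Z" m1] assms(2)
    by (simp add: Q_def X_def m1_def)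
  have "\<sigma> * disc Q = \<sigma> * disc (A @ C1 @ M1 @ M2 @ C2 @ Z)"
    using e by (simp add: Q_def X_def m1_def m2_def e1_def e2_def algebra_simps)
  then have disc: "disc Q = disc (A @ C1 @ M1 @ M2 @ C2 @ Z)"
    using assms(4) by auto
  have "\<sigma> * disc X = \<sigma> * disc (A @ C1 @ M1) + e2 * e1"
    using e by (simp add: X_def m1_def e1_def algebra_simps)
  then have "\<sigma> * disc (A @ C1 @ M1) < \<sigma> * disc X"
    using e by simp
  also have "\<dots> \<le> \<bar>disc (take (length X) Q)\<bar>"
    using abs_ge_self[of "\<sigma> * disc X"] assms(4) by (simp add: Q_def abs_mult)
  also have "\<dots> \<le> dmax Q"
    by (rule abs_disc_take_le_dmax) (simp add: Q_def)
  finally show thesis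
    using that comp disc by blast
qed

lemma pump_to_exceed_dmax:
  assumes "transducer T" "card (states T) \<le> k"
    and "computation T P" "disc P = 0" "int k \<le> dmax P"
  obtains Q where "computation T Q" "disc Q = 0" "int k < dmax Q"
proof -
  obtain i where i: "i \<le> length P" "\<bar>disc (take i P)\<bar> = dmax P"
    using dmax_attained by blast
  have "0 < card (states T)"
    using assms(1) by (auto simp: transducer_def card_gt_0_iff)
  then have peak: "disc (take i P) \<noteq> 0"
    using i assms(2,5) by auto
  define \<sigma> where "\<sigma> = sgn (disc (take i P))"
  have \<sigma>: "\<bar>\<sigma>\<bar> = 1" "int k \<le> \<sigma> * disc (take i P)"
    using peak i assms(5) by (simp_all add: \<sigma>_def abs_sgn mult.commute)
  have P: "is_path T P" "P \<noteq> []"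
    using assms(3) peak by (auto simp: computation_def)
  obtain A1 C1 B1 where 1: "take i P = A1 @ C1 @ B1" "is_cycle T C1" "0 < \<sigma> * disc C1"
    using rising_cycle[OF assms(1) P assms(2) \<sigma>(1), of 0 i] i \<sigma>(2) by auto
  obtain A2 C2 B2 where 2: "drop i P = A2 @ C2 @ B2" "is_cycle T C2" "0 < - \<sigma> * disc C2"
    using rising_cycle[OF assms(1) P assms(2), of "- \<sigma>" i "length P"] i \<sigma> assms(4) by auto
  have "P = A1 @ C1 @ B1 @ A2 @ C2 @ B2"
    using 1(1) 2(1) append_take_drop_id[of i P] by simp
  then obtain Q where "computation T Q" "disc Q = disc P" "\<sigma> * disc (A1 @ C1 @ B1) < dmax Q"
    using pump_opposite_cycles[of T A1 C1 B1 A2 C2 B2 \<sigma>] assms(3) 1 2 \<sigma>(1) by auto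
  then show thesis
    using that assms(4) \<sigma>(2) 1(1) by auto
qed

lemma zero_avoiding_decrease_bound:
  assumes "transducer T" "card (states T) \<le> Suc k" "zero_avoiding T (Suc k)"
  shows "zero_avoiding T k"
  unfolding zero_avoiding_def
proof (intro allI impI notI)
  fix P
  assume "computation T P" "int k < dmax P" "disc P = 0"
  then obtain Q where "computation T Q" "disc Q = 0" "int (Suc k) < dmax Q"
    using pump_to_exceed_dmax[OF assms(1,2), of P] by auto
  with assms(3) show False
    unfolding zero_avoiding_def by blast
qed

theorem proposition2:
  fixes T :: "('q, 'a) transducer" and n k :: nat
  assumes "transducer T"
    and "n = card (states T)" and "n \<ge> 1"
    and "zero_avoiding_min T k"
  shows "k < n"
proof (rule ccontr)
  assume "\<not> k < n"
  then obtain k' where k: "k = Suc k'" "card (states T) \<le> Suc k'"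
    using assms(2,3) by (cases k) auto
  then have "zero_avoiding T k'"
    using assms(4) zero_avoiding_decrease_bound[OF assms(1) k(2)]
    unfolding zero_avoiding_min_def by simp
  then show False
    using assms(4) k(1) unfolding zero_avoiding_min_def by simp
qed

end
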